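(* In a positive, anchored hidden Markov model, under any (measurable) policy $g$, the restricted information chain $F|_R$ has at least one state of the form $\delta(x_i)$ (with $(x_i,y_i)$ an anchor pair for some observation process $i$) which is positive recurrent, i.e. whose expected return time is finite.
   Context: Model: $(X_t)$ is a time-homogeneous Markov chain on $S=\{1,\dots,n\}$ with transition matrix $T$; $O$ is a finite index set of observation processes with values in $V=\{1,\dots,m\}$ and observation matrices $M^{(i)}$, $M^{(i)}_{jk}=\mathbb P(Y^{(i)}_t=k\mid X_t=j)$. $\mathcal P(S)$ is the probability simplex in $\mathbb R^n$, $\delta(x)$ the point mass at $x$. A policy is a function $g:\mathcal P(S)\to O$, $A_i=g^{-1}\{i\}$. For $i\in O$, $y\in V$: $\alpha_{i,y}(z)=(zTM^{(i)})_y=\sum_{j,x}z_jT_{j,x}M^{(i)}_{x,y}$ and, when $\alpha_{i,y}(z)>0$, $r_{i,y}(z)=\frac{\sum_{x,j}M^{(i)}_{x,y}T_{j,x}z_j\delta(x)}{\sum_{x,j}M^{(i)}_{x,y}T_{j,x}z_j}$. Positive: all entries of $T$ strictly positive. Anchored: $(X_t)$ ergodic and for each $i\in O$ there is an anchor pair $(x_i,y_i)$ with $M^{(i)}_{x_i,y_i}>0$ and $M^{(i)}_{x,y_i}=0$ for $x\ne x_i$. Orbit $R_x$: $\delta(x)$ together with all points $r_{i_k,y_k}\circ\cdots\circ r_{i_1,y_1}(\delta(x))$ ($k\ge1$, arbitrary $i_j\in O,y_j\in V$) with each $\alpha_{i_{j+1},y_{j+1}}$ positive at the preceding point; $R=\bigcup_xR_x$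 (countable). The restricted information chain $F|_R$ is the Markov chain on $R$ that from $z$ moves to $r_{g(z),y}(z)$ with probability $\alpha_{g(z),y}(z)$, $y\in V$ (this is the information state chain, i.e. the posterior of the hidden state, restricted to $R$). *)

theory Defs
  imports "HOL-Analysis.Analysis"
begin

text \<open>States: finite type 's (the set S); observation values:
finite type 'v (the set V); observation processes: finite type 'o (the index set O).
Transition matrix T :: 's => 's => real, observation matrices M i x y = P(Y^(i)_t = y | X_t = x).\<close>

definition stochastic_matrix :: "('a::finite \<Rightarrow> 'b::finite \<Rightarrow> real) \<Rightarrow> bool" where
  "stochastic_matrix A \<longleftrightarrow> (\<forall>i j. A i j \<ge> 0) \<and> (\<forall>i. (\<Sum>j\<in>UNIV. A i j) = 1)"

definition prob_simplex :: "('s::finite \<Rightarrow> real) set" where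
  "prob_simplex = {z. (\<forall>s. z s \<ge> 0) \<and> (\<Sum>s\<in>UNIV. z s) = 1}"

definition delta :: "'s \<Rightarrow> 's \<Rightarrow> real" where
  "delta x = (\<lambda>s. if s = x then 1 else 0)"

fun mpow :: "('s::finite \<Rightarrow> 's \<Rightarrow> real) \<Rightarrow> nat \<Rightarrow> 's \<Rightarrow> 's \<Rightarrow> real" where
  "mpow A 0 = (\<lambda>i j. if i = j then 1 else 0)"
| "mpow A (Suc k) = (\<lambda>i j. \<Sum>l\<in>UNIV. mpow A k i l * A l j)"

definition irreducible_chain :: "('s::finite \<Rightarrow> 's \<Rightarrow> real) \<Rightarrow> bool" where
  "irreducible_chain A \<longleftrightarrow> (\<forall>i j. \<exists>k. mpow A k i j > 0)"

definition aperiodic_chain :: "('s::finite \<Rightarrow> 's \<Rightarrow> real) \<Rightarrow> bool" where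
  "aperiodic_chain A \<longleftrightarrow> (\<forall>i. Gcd {k. k > 0 \<and> mpow A k i i > 0} = 1)"

definition ergodic_chain :: "('s::finite \<Rightarrow> 's \<Rightarrow> real) \<Rightarrow> bool" where
  "ergodic_chain A \<longleftrightarrow> irreducible_chain A \<and> aperiodic_chain A"

definition positive_chain :: "('s::finite \<Rightarrow> 's \<Rightarrow> real) \<Rightarrow> bool" where
  "positive_chain A \<longleftrightarrow> (\<forall>i j. A i j > 0)"

definition anchor_pair :: "('o \<Rightarrow> 's \<Rightarrow> 'v \<Rightarrow> real) \<Rightarrow> 'o \<Rightarrow> 's \<Rightarrow> 'v \<Rightarrow> bool" where
  "anchor_pair M i x y \<longleftrightarrow> M i x y > 0 \<and> (\<forall>x'. x' \<noteq> x \<longrightarrow> M i x' y = 0)"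

definition anchored :: "('s::finite \<Rightarrow> 's \<Rightarrow> real) \<Rightarrow> ('o \<Rightarrow> 's \<Rightarrow> 'v \<Rightarrow> real) \<Rightarrow> bool" where
  "anchored T M \<longleftrightarrow> ergodic_chain T \<and> (\<forall>i. \<exists>x y. anchor_pair M i x y)"

definition alpha :: "('s::finite \<Rightarrow> 's \<Rightarrow> real) \<Rightarrow> ('o \<Rightarrow> 's \<Rightarrow> 'v \<Rightarrow> real) \<Rightarrow> 'o \<Rightarrow> 'v
    \<Rightarrow> ('s \<Rightarrow> real) \<Rightarrow> real" where
  "alpha T M i y z = (\<Sum>j\<in>UNIV. \<Sum>x\<in>UNIV. z j * T j x * M i x y)"

definition rupd :: "('s::finite \<Rightarrow> 's \<Rightarrow> real) \<Rightarrow> ('o \<Rightarrow> 's \<Rightarrow> 'v \<Rightarrow> real) \<Rightarrow> 'o \<Rightarrow> 'v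
    \<Rightarrow> ('s \<Rightarrow> real) \<Rightarrow> ('s \<Rightarrow> real)" where
  "rupd T M i y z = (\<lambda>x. (\<Sum>j\<in>UNIV. M i x y * T j x * z j) / alpha T M i y z)"

inductive_set info_orbit :: "('s::finite \<Rightarrow> 's \<Rightarrow> real) \<Rightarrow> ('o \<Rightarrow> 's \<Rightarrow> 'v \<Rightarrow> real)
    \<Rightarrow> 's \<Rightarrow> ('s \<Rightarrow> real) set" for T M x where
  base: "delta x \<in> info_orbit T M x"
| step: "z \<in> info_orbit T M x \<Longrightarrow> alpha T M i y z > 0 \<Longrightarrow> rupd T M i y z \<in> info_orbit T M x"

definition info_R :: "('s::finite \<Rightarrow> 's \<Rightarrow> real) \<Rightarrow> ('o \<Rightarrow> 's \<Rightarrow> 'v \<Rightarrow> real) \<Rightarrow> ('s \<Rightarrow> real) set" where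
  "info_R T M = (\<Union>x. info_orbit T M x)"

text \<open>First-passage probabilities of the information chain under policy g:
  first_ret T M g a k w = P_w(the chain, started at w, is at a at step k and not at a at
  steps 1..k-1). From state w the chain moves to rupd (g w) y w with probability
  alpha (g w) y w (summing over observation values y).\<close>
fun first_ret :: "('s::finite \<Rightarrow> 's \<Rightarrow> real) \<Rightarrow> ('o \<Rightarrow> 's \<Rightarrow> 'v::finite \<Rightarrow> real)
    \<Rightarrow> (('s \<Rightarrow> real) \<Rightarrow> 'o) \<Rightarrow> ('s \<Rightarrow> real) \<Rightarrow> nat \<Rightarrow> ('s \<Rightarrow> real) \<Rightarrow> real" where
  "first_ret T M g a 0 w = 0"
| "first_ret T M g a (Suc 0) w =
     (\<Sum>y\<in>UNIV. if alpha T M (g w) y w > 0 \<and> rupd T M (g w) y w = a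
                 then alpha T M (g w) y w else 0)"
| "first_ret T M g a (Suc (Suc k)) w =
     (\<Sum>y\<in>UNIV. if alpha T M (g w) y w > 0 \<and> rupd T M (g w) y w \<noteq> a
                 then alpha T M (g w) y w * first_ret T M g a (Suc k) (rupd T M (g w) y w) else 0)"

text \<open>A state a of the restricted chain F|_R is positive recurrent iff the return time
  to a is a.s. finite and has finite expectation.\<close>
definition positive_recurrent :: "('s::finite \<Rightarrow> 's \<Rightarrow> real) \<Rightarrow> ('o \<Rightarrow> 's \<Rightarrow> 'v::finite \<Rightarrow> real)
    \<Rightarrow> (('s \<Rightarrow> real) \<Rightarrow> 'o) \<Rightarrow> ('s \<Rightarrow> real) \<Rightarrow> bool" where
  "positive_recurrent T M g a \<longleftrightarrow> a \<in> info_R T M \<and>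
     (\<lambda>k. first_ret T M g a k a) sums 1 \<and>
     summable (\<lambda>k. real k * first_ret T M g a k a)"

end

theory Submission
  imports Defs
begin

text \<open>Whatever process the policy selects, its anchor value is observed with probability at
  least \<open>c = min T\<^sub>j\<^sub>x M\<^sub>x\<^sub>y > 0\<close>, uniformly over information states, and this observation
  sends the information state to the anchor point mass \<open>\<delta>(x)\<close>. So the information chain hits
  the finite set of anchor point masses with probability at least \<open>c\<close> at every step. In such
  a chain pick a point mass \<open>a\<close> that every point mass reachable from \<open>a\<close> can reach back; from
  every state reachable from \<open>a\<close> the chain then returns to \<open>a\<close> within a fixed number of steps
  with probability bounded below, so the return time to \<open>a\<close> has geometric tails.\<close>

lemma summable_of_nat_times_power:
  fixes s :: real
  assumes "0 \<le> s" "s < 1"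
  shows "summable (\<lambda>n. real n * s ^ n)"
proof -
  define t where "t = sqrt s"
  have t: "0 \<le> t" "t < 1" "s = t\<^sup>2" using assms by (auto simp: t_def)
  have "(\<lambda>n. real n * t ^ n) \<longlonglongrightarrow> 0"
    using powser_times_n_limit_0[of t] t by simp
  then have "eventually (\<lambda>n. \<bar>real n * t ^ n\<bar> < 1) sequentially"
    by (intro order_tendstoD(2)[OF tendsto_rabs_zero]) simp_all
  then have "eventually (\<lambda>n. norm (real n * s ^ n) \<le> t ^ n) sequentially"
  proof eventually_elim
    case (elim n)
    have "norm (real n * s ^ n) = \<bar>real n * t ^ n\<bar> * t ^ n"
      using t(1) by (simp add: t(3) abs_mult power_mult power2_eq_square power_mult_distrib)
    also have "\<dots> \<le> 1 * t ^ n"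
      using elim t(1) by (intro mult_right_mono) simp_all
    finally show ?case by simp
  qed
  then show ?thesis
    by (rule summable_comparison_test_ev) (use t in simp)
qed

lemma tranclp_finite_recurrent_point:
  fixes R :: "'a \<Rightarrow> 'a \<Rightarrow> bool"
  assumes "finite D" "d\<^sub>0 \<in> D" and succ: "\<And>d. d \<in> D \<Longrightarrow> \<exists>d'\<in>D. R\<^sup>+\<^sup>+ d d'"
  shows "\<exists>b\<in>D. \<forall>d\<in>D. R\<^sup>+\<^sup>+ b d \<longrightarrow> R\<^sup>+\<^sup>+ d b"
proof -
  define reach where "reach a = {d \<in> D. R\<^sup>+\<^sup>+ a d}" for a
  have fin: "finite (reach a)" for a using \<open>finite D\<close> by (simp add: reach_def)
  obtain a where "a \<in> D" and a_min: "\<And>a'. a' \<in> D \<Longrightarrow> card (reach a) \<le> card (reach a')"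
    using ex_has_least_nat[of "\<lambda>a. a \<in> D" d\<^sub>0 "\<lambda>a. card (reach a)"] \<open>d\<^sub>0 \<in> D\<close> by blast
  obtain b where b: "b \<in> reach a" using succ[OF \<open>a \<in> D\<close>] by (auto simp: reach_def)
  have "R\<^sup>+\<^sup>+ d b" if "d \<in> D" "R\<^sup>+\<^sup>+ b d" for d
  proof -
    have sub: "reach d \<subseteq> reach a"
      using b that(2) by (auto simp: reach_def intro: tranclp_trans)
    with fin a_min[OF \<open>d \<in> D\<close>] have "reach d = reach a"
      by (metis card_seteq)
    with b show ?thesis unfolding reach_def by blast
  qed
  with b show ?thesis by (auto simp: reach_def)
qed

locale finite_branching_chain =
  fixes K :: "'a set" and P :: "'a \<Rightarrow> 'v::finite \<Rightarrow> real" and nxt :: "'a \<Rightarrow> 'v \<Rightarrow> 'a"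
  assumes P_nonneg: "w \<in> K \<Longrightarrow> 0 \<le> P w y"
    and sum_P: "w \<in> K \<Longrightarrow> (\<Sum>y\<in>UNIV. P w y) = 1"
    and nxt_closed: "w \<in> K \<Longrightarrow> 0 < P w y \<Longrightarrow> nxt w y \<in> K"
begin

definition step :: "'a \<Rightarrow> 'a \<Rightarrow> bool" where
  "step w v \<longleftrightarrow> (\<exists>y. 0 < P w y \<and> nxt w y = v)"

definition absorbing :: "'a set \<Rightarrow> bool" where
  "absorbing S \<longleftrightarrow> S \<subseteq> K \<and> (\<forall>w\<in>S. \<forall>y. 0 < P w y \<longrightarrow> nxt w y \<in> S)"

primrec survival :: "'a \<Rightarrow> nat \<Rightarrow> 'a \<Rightarrow> real" where
  "survival a 0 w = 1"
| "survival a (Suc n) w =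
     (\<Sum>y\<in>UNIV. if 0 < P w y \<and> nxt w y \<noteq> a then P w y * survival a n (nxt w y) else 0)"

fun first_passage :: "'a \<Rightarrow> nat \<Rightarrow> 'a \<Rightarrow> real" where
  "first_passage a 0 w = 0"
| "first_passage a (Suc 0) w = (\<Sum>y\<in>UNIV. if 0 < P w y \<and> nxt w y = a then P w y else 0)"
| "first_passage a (Suc (Suc k)) w =
     (\<Sum>y\<in>UNIV. if 0 < P w y \<and> nxt w y \<noteq> a
                 then P w y * first_passage a (Suc k) (nxt w y) else 0)"

definition positive_recurrent_at :: "'a \<Rightarrow> bool" where
  "positive_recurrent_at a \<longleftrightarrow>
     (\<lambda>k. first_passage a k a) sums 1 \<and> summable (\<lambda>k. real k * first_passage a k a)"

lemma tranclp_step_closed: "step\<^sup>+\<^sup>+ w v \<Longrightarrow> w \<in> K \<Longrightarrow> v \<in> K"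
  by (induction rule: tranclp_induct) (auto simp: step_def intro: nxt_closed)

lemma survival_nonneg_le_1:
  assumes "w \<in> K" shows "0 \<le> survival a n w \<and> survival a n w \<le> 1"
  using assms
proof (induction n arbitrary: w)
  case 0 then show ?case by simp
next
  case (Suc n)
  have "0 \<le> survival a (Suc n) w"
    using Suc nxt_closed P_nonneg by (auto intro!: sum_nonneg)
  moreover have "survival a (Suc n) w \<le> (\<Sum>y\<in>UNIV. P w y)"
    unfolding survival.simps
  proof (rule sum_mono)
    fix y
    show "(if 0 < P w y \<and> nxt w y \<noteq> a then P w y * survival a n (nxt w y) else 0) \<le> P w y"
      using Suc.IH[OF nxt_closed[OF Suc.prems]] P_nonneg[OF Suc.prems, of y]
      by (auto intro: mult_left_le)
  qed
  ultimately show ?case using sum_P[OF Suc.prems] by simp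
qed

lemma survival_Suc_le: "w \<in> K \<Longrightarrow> survival a (Suc n) w \<le> survival a n w"
proof (induction n arbitrary: w)
  case 0 then show ?case using survival_nonneg_le_1[of w a 1] by simp
next
  case (Suc n)
  show ?case
    unfolding survival.simps(2)[of a "Suc n" w] survival.simps(2)[of a n w]
    using Suc nxt_closed
    by (intro sum_mono) (auto simp del: survival.simps intro: mult_left_mono)
qed

lemma survival_antimono:
  assumes "w \<in> K" "m \<le> n" shows "survival a n w \<le> survival a m w"
  using assms(2)
proof (induction n rule: dec_induct)
  case (step k)
  then show ?case using survival_Suc_le[OF assms(1), of a k] by linarith
qed simp

lemma first_passage_Suc:
  "w \<in> K \<Longrightarrow> first_passage a (Suc k) w = survival a k w - survival a (Suc k) w"
proof (induction k arbitrary: w)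
  case 0
  have "(\<Sum>y\<in>UNIV. P w y) = (\<Sum>y\<in>UNIV. if 0 < P w y \<and> nxt w y = a then P w y else 0)
      + (\<Sum>y\<in>UNIV. if 0 < P w y \<and> nxt w y \<noteq> a then P w y * survival a 0 (nxt w y) else 0)"
    unfolding sum.distrib[symmetric]
    by (rule sum.cong) (use P_nonneg[OF 0] in \<open>auto simp: less_le\<close>)
  then show ?case using sum_P[OF 0] by simp
next
  case (Suc k)
  have "first_passage a (Suc (Suc k)) w =
     (\<Sum>y\<in>UNIV. if 0 < P w y \<and> nxt w y \<noteq> a
                 then P w y * (survival a k (nxt w y) - survival a (Suc k) (nxt w y)) else 0)"
    by (auto simp: Suc.IH nxt_closed Suc.prems simp del: survival.simps intro: sum.cong)
  also have "\<dots> = survival a (Suc k) w - survival a (Suc (Suc k)) w"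
    unfolding survival.simps(2)[of a k w] survival.simps(2)[of a "Suc k" w] sum_subtractf[symmetric]
    by (rule sum.cong) (auto simp: algebra_simps)
  finally show ?case .
qed

lemma survival_Suc_le_escape:
  assumes w: "w \<in> K" and y: "0 < P w y"
  shows "survival a (Suc n) w \<le> 1 - P w y * (if nxt w y = a then 1 else 1 - survival a n (nxt w y))"
proof -
  define f where "f y' = (if 0 < P w y' \<and> nxt w y' \<noteq> a then P w y' * survival a n (nxt w y') else 0)"
    for y'
  have f_le: "f y' \<le> P w y'" for y'
    using survival_nonneg_le_1[OF nxt_closed[OF w], of y' a n] P_nonneg[OF w, of y']
    by (auto simp: f_def intro: mult_left_le)
  have "survival a (Suc n) w = f y + (\<Sum>y'\<in>UNIV - {y}. f y')"
    unfolding survival.simps f_def[symmetric] by (simp add: sum.remove)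
  also have "\<dots> \<le> (P w y - P w y * (if nxt w y = a then 1 else 1 - survival a n (nxt w y)))
                  + (\<Sum>y'\<in>UNIV - {y}. P w y')"
    using y by (intro add_mono sum_mono f_le) (simp add: f_def algebra_simps)
  also have "(\<Sum>y'\<in>UNIV - {y}. P w y') = 1 - P w y"
    using sum_P[OF w] sum.remove[of UNIV y "P w"] by simp
  finally show ?thesis by simp
qed

lemma survival_lt_1_if_tranclp_step:
  "step\<^sup>+\<^sup>+ w a \<Longrightarrow> w \<in> K \<Longrightarrow> \<exists>n. survival a n w < 1"
proof (induction rule: converse_tranclp_induct)
  case (base w)
  then obtain y where "0 < P w y" "nxt w y = a" by (auto simp: step_def)
  then show ?case using survival_Suc_le_escape[OF base.prems, of y a 0] by (intro exI[of _ 1]) simp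
next
  case (step w v)
  then obtain y where y: "0 < P w y" "nxt w y = v" by (auto simp: step_def)
  obtain n where "survival a n v < 1" using step.IH y nxt_closed[OF step.prems] by blast
  then have "0 < P w y * (if v = a then 1 else 1 - survival a n v)" using y by simp
  then have "survival a (Suc n) w < 1"
    using survival_Suc_le_escape[OF step.prems y(1), of a n] unfolding y(2) by linarith
  then show ?case ..
qed

lemma survival_add_le:
  assumes S: "absorbing S" and bound: "\<And>w. w \<in> S \<Longrightarrow> survival a n w \<le> B" and "0 \<le> B"
  shows "w \<in> S \<Longrightarrow> survival a (m + n) w \<le> B * survival a m w"
proof (induction m arbitrary: w)
  case 0 then show ?case using bound by simp
next
  case (Suc m)
  have "survival a (Suc m + n) w
      \<le> (\<Sum>y\<in>UNIV. if 0 < P w y \<and> nxt w y \<noteq> a then P w y * (B * survival a m (nxt w y)) else 0)"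
    unfolding add_Suc survival.simps
    using Suc S by (intro sum_mono) (auto simp: absorbing_def intro!: mult_left_mono)
  also have "\<dots> = B * survival a (Suc m) w"
    unfolding survival.simps sum_distrib_left by (rule sum.cong) auto
  finally show ?case .
qed

lemma survival_mult_le_power:
  assumes S: "absorbing S" and bound: "\<And>w. w \<in> S \<Longrightarrow> survival a N w \<le> B" and B: "0 \<le> B"
  shows "w \<in> S \<Longrightarrow> survival a (N * j) w \<le> B ^ j"
proof (induction j arbitrary: w)
  case 0 then show ?case by simp
next
  case (Suc j)
  have "survival a (N * Suc j) w \<le> B * survival a (N * j) w"
    using survival_add_le[OF S bound B Suc.prems, of "N * j"] by (simp add: add.commute)
  also have "\<dots> \<le> B * B ^ j" by (rule mult_left_mono[OF Suc.IH[OF Suc.prems] B])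
  finally show ?case by simp
qed

lemma positive_recurrent_at_if_survival_le_geometric:
  assumes "a \<in> K" "0 \<le> s" "s < 1" and bound: "\<And>k. survival a k a \<le> C * s ^ k"
  shows "positive_recurrent_at a"
proof -
  define U where "U k = survival a k a" for k
  define f where "f = (\<lambda>k. first_passage a k a)"
  have U_nonneg: "0 \<le> U k" for k using survival_nonneg_le_1[OF \<open>a \<in> K\<close>] by (simp add: U_def)
  have f_Suc: "f (Suc k) = U k - U (Suc k)" for k
    using first_passage_Suc[OF \<open>a \<in> K\<close>] by (simp add: f_def U_def)
  have f_nonneg: "0 \<le> f (Suc k)" for k
    using survival_Suc_le[OF \<open>a \<in> K\<close>, of a k] by (simp add: f_Suc U_def)
  have f_le: "f (Suc k) \<le> C * s ^ k" for k
    using f_Suc U_nonneg[of "Suc k"] bound[of k] by (simp add: U_def)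
  have "U \<longlonglongrightarrow> 0"
  proof (rule tendsto_sandwich[of "\<lambda>_. 0" _ _ "\<lambda>k. C * s ^ k"])
    show "(\<lambda>k. C * s ^ k) \<longlonglongrightarrow> 0"
      using assms(2,3) by (intro tendsto_mult_right_zero LIMSEQ_power_zero) simp
  qed (use U_nonneg bound in \<open>simp_all add: U_def\<close>)
  then have "(\<lambda>n. 1 - U n) \<longlonglongrightarrow> 1 - 0"
    by (intro tendsto_diff tendsto_const)
  moreover have "(\<Sum>k<n. f (Suc k)) = 1 - U n" for n
    by (simp only: f_Suc sum_lessThan_telescope'[of U]) (simp add: U_def)
  ultimately have "(\<lambda>k. f (Suc k)) sums 1" by (simp add: sums_def)
  moreover have "f 0 = 0" by (simp add: f_def)
  ultimately have "f sums 1" using sums_Suc_iff[of f 1] by simp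
  have "summable (\<lambda>k. real (Suc k) * f (Suc k))"
  proof (rule summable_comparison_test')
    show "summable (\<lambda>k. C * (real k * s ^ k + s ^ k))"
      using assms(2,3) by (intro summable_mult summable_add summable_of_nat_times_power) simp_all
    show "norm (real (Suc k) * f (Suc k)) \<le> C * (real k * s ^ k + s ^ k)" for k
      using mult_left_mono[OF f_le[of k], of "real (Suc k)"] f_nonneg[of k]
      by (simp add: algebra_simps)
  qed
  then have "summable (\<lambda>k. real k * f k)"
    using summable_Suc_iff[of "\<lambda>k. real k * f k"] by simp
  with \<open>f sums 1\<close> show ?thesis by (simp add: positive_recurrent_at_def f_def)
qed

text \<open>Replacing \<open>B\<close> by \<open>B' = max B (1/2)\<close> keeps the bound positive, so that with
  \<open>s = root N B'\<close> one gets \<open>survival a k a \<le> s ^ k / B'\<close>.\<close>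

lemma positive_recurrent_at_if_uniform_survival_bound:
  assumes S: "absorbing S" "a \<in> S" and "0 < N" "B < 1"
    and bound: "\<And>w. w \<in> S \<Longrightarrow> survival a N w \<le> B"
  shows "positive_recurrent_at a"
proof -
  define B' where "B' = max B (1/2)"
  have B': "0 < B'" "B' < 1" using \<open>B < 1\<close> by (auto simp: B'_def)
  define s where "s = root N B'"
  have s: "0 \<le> s" "s < 1" "s ^ N = B'" using B' \<open>0 < N\<close> by (auto simp: s_def)
  have "a \<in> K" using S by (auto simp: absorbing_def)
  have "survival a k a \<le> (1 / B') * s ^ k" for k
  proof -
    have "survival a k a \<le> survival a (N * (k div N)) a"
      by (rule survival_antimono[OF \<open>a \<in> K\<close>]) simp
    also have "\<dots> \<le> B' ^ (k div N)"
      using bound B' S by (intro survival_mult_le_power[of S]) (auto simp: B'_def le_max_iff_disj)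
    also have "B' ^ (k div N) * B' = s ^ (N * Suc (k div N))"
      by (simp add: s(3)[symmetric] power_add power_mult)
    also have "\<dots> \<le> s ^ k"
      using s \<open>0 < N\<close> by (intro power_decreasing) (simp_all add: dividend_less_times_div less_imp_le)
    finally show ?thesis using B' by (simp add: field_simps)
  qed
  with \<open>a \<in> K\<close> s show ?thesis
    by (intro positive_recurrent_at_if_survival_le_geometric[where C = "1 / B'"]) auto
qed

lemma uniform_survival_lt_1:
  assumes "finite A" "A \<subseteq> K" and escape: "\<And>d. d \<in> A \<Longrightarrow> \<exists>n. survival a n d < 1"
  obtains N \<delta> where "0 < \<delta>" "\<And>d. d \<in> A \<Longrightarrow> survival a N d \<le> 1 - \<delta>"
proof -
  obtain n where n: "\<And>d. d \<in> A \<Longrightarrow> survival a (n d) d < 1" using escape by metis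
  define N where "N = Max (n ` A)"
  define \<delta> where "\<delta> = Min (insert 1 ((\<lambda>d. 1 - survival a N d) ` A))"
  have lt_1: "survival a N d < 1" if "d \<in> A" for d
    using survival_antimono[of d "n d" N a] n[OF that] that assms(1,2)
    by (force simp: N_def)
  have "0 < \<delta>" using assms(1) lt_1 by (simp add: \<delta>_def)
  moreover have "survival a N d \<le> 1 - \<delta>" if "d \<in> A" for d
  proof -
    have "\<delta> \<le> 1 - survival a N d" using assms(1) that by (simp add: \<delta>_def)
    then show ?thesis by linarith
  qed
  ultimately show thesis by (rule that)
qed

lemma absorbing_reachable:
  assumes "a \<in> K" shows "absorbing {w. step\<^sup>*\<^sup>* a w}"
proof -
  have "w \<in> K" if "step\<^sup>*\<^sup>* a w" for w
    using rtranclpD[OF that] tranclp_step_closed[OF _ assms] assms by blast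
  moreover have "step w (nxt w y)" if "0 < P w y" for w y using that by (auto simp: step_def)
  ultimately show ?thesis
    by (auto simp: absorbing_def intro: rtranclp.rtrancl_into_rtrancl)
qed

theorem exists_positive_recurrent_in_hitting_set:
  assumes "finite D" "D \<subseteq> K" "d\<^sub>0 \<in> D" "0 < c"
    and hit: "\<And>w. w \<in> K \<Longrightarrow> \<exists>y. c \<le> P w y \<and> nxt w y \<in> D"
  shows "\<exists>a\<in>D. positive_recurrent_at a"
proof -
  have "\<exists>d\<in>D. step\<^sup>+\<^sup>+ w d" if "w \<in> K" for w
    using hit[OF that] \<open>0 < c\<close> by (force simp: step_def)
  then obtain a where "a \<in> D" and returns: "\<And>d. d \<in> D \<Longrightarrow> step\<^sup>+\<^sup>+ a d \<Longrightarrow> step\<^sup>+\<^sup>+ d a"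
    using tranclp_finite_recurrent_point[of D d\<^sub>0 step] assms(1-3) by blast
  define S where "S = {w. step\<^sup>*\<^sup>* a w}"
  have "a \<in> K" using \<open>a \<in> D\<close> \<open>D \<subseteq> K\<close> by blast
  then have S: "absorbing S" unfolding S_def by (rule absorbing_reachable)
  then have "S \<subseteq> K" by (simp add: absorbing_def)
  define A where "A = {d \<in> D. step\<^sup>+\<^sup>+ a d}"
  have "A \<subseteq> K" using \<open>D \<subseteq> K\<close> by (auto simp: A_def)
  have "finite A" using \<open>finite D\<close> by (simp add: A_def)
  have "\<exists>n. survival a n d < 1" if "d \<in> A" for d
    using that returns \<open>A \<subseteq> K\<close> survival_lt_1_if_tranclp_step by (auto simp: A_def)
  then obtain N \<delta> where "0 < \<delta>" and escape: "\<And>d. d \<in> A \<Longrightarrow> survival a N d \<le> 1 - \<delta>"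
    using uniform_survival_lt_1[OF \<open>finite A\<close> \<open>A \<subseteq> K\<close>] by blast
  have "survival a (Suc N) w \<le> 1 - c * \<delta>" if "w \<in> S" for w
  proof -
    have "w \<in> K" using that \<open>S \<subseteq> K\<close> by blast
    obtain y where y: "c \<le> P w y" "nxt w y \<in> D" using hit[OF \<open>w \<in> K\<close>] by blast
    let ?d = "nxt w y"
    have "step w ?d" using y \<open>0 < c\<close> unfolding step_def by force
    with that have "step\<^sup>+\<^sup>+ a ?d" by (simp add: S_def rtranclp_into_tranclp1)
    then have "?d \<in> A" "?d \<in> K" using y(2) \<open>A \<subseteq> K\<close> by (auto simp: A_def)
    then have "\<delta> \<le> (if ?d = a then 1 else 1 - survival a N ?d)"
      using escape survival_nonneg_le_1[of ?d a N] by force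
    then have "c * \<delta> \<le> P w y * (if ?d = a then 1 else 1 - survival a N ?d)"
      using y(1) \<open>0 < c\<close> \<open>0 < \<delta>\<close> by (intro mult_mono) simp_all
    then show ?thesis
      using survival_Suc_le_escape[OF \<open>w \<in> K\<close>, of y a N] y(1) \<open>0 < c\<close> by linarith
  qed
  then have "positive_recurrent_at a"
    using S \<open>0 < c\<close> \<open>0 < \<delta>\<close>
    by (intro positive_recurrent_at_if_uniform_survival_bound[of S _ "Suc N" "1 - c * \<delta>"])
      (auto simp: S_def)
  with \<open>a \<in> D\<close> show ?thesis ..
qed

end

lemma delta_in_prob_simplex: "delta x \<in> prob_simplex"
  by (simp add: prob_simplex_def delta_def)

lemma delta_in_info_R: "delta x \<in> info_R T M"
  by (auto simp: info_R_def intro: info_orbit.base)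

locale hmm =
  fixes T :: "'s::finite \<Rightarrow> 's \<Rightarrow> real" and M :: "'o::finite \<Rightarrow> 's \<Rightarrow> 'v::finite \<Rightarrow> real"
  assumes stochastic_T: "stochastic_matrix T" and stochastic_M: "\<And>i. stochastic_matrix (M i)"
begin

lemma T_nonneg: "0 \<le> T j x" and sum_T: "(\<Sum>x\<in>UNIV. T j x) = 1"
  using stochastic_T by (simp_all add: stochastic_matrix_def)

lemma M_nonneg: "0 \<le> M i x y" and sum_M: "(\<Sum>y\<in>UNIV. M i x y) = 1"
  using stochastic_M[of i] by (simp_all add: stochastic_matrix_def)

lemma alpha_nonneg: "z \<in> prob_simplex \<Longrightarrow> 0 \<le> alpha T M i y z"
  unfolding alpha_def prob_simplex_def by (auto intro!: sum_nonneg simp: T_nonneg M_nonneg)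

lemma sum_alpha:
  assumes "z \<in> prob_simplex" shows "(\<Sum>y\<in>UNIV. alpha T M i y z) = 1"
proof -
  have "(\<Sum>y\<in>UNIV. alpha T M i y z) = (\<Sum>j\<in>UNIV. \<Sum>y\<in>UNIV. \<Sum>x\<in>UNIV. z j * T j x * M i x y)"
    unfolding alpha_def by (rule sum.swap)
  also have "\<dots> = (\<Sum>j\<in>UNIV. \<Sum>x\<in>UNIV. z j * T j x * (\<Sum>y\<in>UNIV. M i x y))"
    unfolding sum_distrib_left by (intro sum.cong refl sum.swap)
  also have "\<dots> = (\<Sum>j\<in>UNIV. z j * (\<Sum>x\<in>UNIV. T j x))"
    by (simp add: sum_M sum_distrib_left)
  also have "\<dots> = 1" using assms by (simp add: sum_T prob_simplex_def)
  finally show ?thesis .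
qed

lemma rupd_in_prob_simplex:
  assumes z: "z \<in> prob_simplex" and pos: "0 < alpha T M i y z"
  shows "rupd T M i y z \<in> prob_simplex"
proof -
  have "(\<Sum>x\<in>UNIV. \<Sum>j\<in>UNIV. M i x y * T j x * z j) = alpha T M i y z"
    unfolding alpha_def by (subst sum.swap) (simp add: mult_ac)
  then have "(\<Sum>x\<in>UNIV. rupd T M i y z x) = 1"
    using pos by (simp add: rupd_def flip: sum_divide_distrib)
  moreover have "0 \<le> rupd T M i y z x" for x
    using z pos unfolding rupd_def prob_simplex_def
    by (auto intro!: divide_nonneg_pos sum_nonneg simp: T_nonneg M_nonneg)
  ultimately show ?thesis by (simp add: prob_simplex_def)
qed

lemma alpha_anchor:
  assumes "anchor_pair M i x y"
  shows "alpha T M i y z = (\<Sum>j\<in>UNIV. z j * T j x) * M i x y"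
proof -
  have "M i x' y = 0" if "x' \<noteq> x" for x' using assms that by (simp add: anchor_pair_def)
  then have "(\<Sum>x'\<in>UNIV. z j * T j x' * M i x' y) = z j * T j x * M i x y" for j
    by (subst sum.remove[of UNIV x]) auto
  then show ?thesis unfolding alpha_def by (simp add: sum_distrib_right)
qed

lemma rupd_anchor:
  assumes anchor: "anchor_pair M i x y" and pos: "0 < alpha T M i y z"
  shows "rupd T M i y z = delta x"
proof
  fix x'
  show "rupd T M i y z x' = delta x x'"
  proof (cases "x' = x")
    case True
    have "(\<Sum>j\<in>UNIV. M i x y * T j x * z j) = alpha T M i y z"
      unfolding alpha_anchor[OF anchor] by (simp add: sum_distrib_left sum_distrib_right mult_ac)
    with True pos show ?thesis by (simp add: rupd_def delta_def)
  next
    case False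
    then have "M i x' y = 0" using anchor by (simp add: anchor_pair_def)
    with False show ?thesis by (simp add: rupd_def delta_def)
  qed
qed

lemma alpha_anchor_ge:
  assumes "anchor_pair M i x y" "z \<in> prob_simplex"
  shows "(MIN j. T j x) * M i x y \<le> alpha T M i y z"
proof -
  have "(MIN j. T j x) = (\<Sum>j\<in>UNIV. z j * (MIN j. T j x))"
    using assms(2) by (simp add: prob_simplex_def flip: sum_distrib_right)
  also have "\<dots> \<le> (\<Sum>j\<in>UNIV. z j * T j x)"
    using assms(2) by (intro sum_mono mult_left_mono) (auto simp: prob_simplex_def)
  finally show ?thesis
    unfolding alpha_anchor[OF assms(1)] by (rule mult_right_mono) (rule M_nonneg)
qed

end

locale hmm_policy = hmm T M
  for T :: "'s::finite \<Rightarrow> 's \<Rightarrow> real" and M :: "'o::finite \<Rightarrow> 's \<Rightarrow> 'v::finite \<Rightarrow> real" +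
  fixes g :: "('s \<Rightarrow> real) \<Rightarrow> 'o"

sublocale hmm_policy \<subseteq> info: finite_branching_chain prob_simplex
  "\<lambda>w y. alpha T M (g w) y w" "\<lambda>w y. rupd T M (g w) y w"
  by unfold_locales (simp_all add: alpha_nonneg sum_alpha rupd_in_prob_simplex)

context hmm_policy
begin

lemma first_ret_eq_first_passage: "first_ret T M g a k w = info.first_passage a k w"
  by (induction a k w rule: info.first_passage.induct) (auto intro!: sum.cong)

lemma positive_recurrent_iff:
  "positive_recurrent T M g a \<longleftrightarrow> a \<in> info_R T M \<and> info.positive_recurrent_at a"
  by (simp add: positive_recurrent_def info.positive_recurrent_at_def first_ret_eq_first_passage)

theorem exists_positive_recurrent_anchor:
  assumes "positive_chain T" and anchors: "\<And>i. anchor_pair M i (xa i) (ya i)"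
  shows "\<exists>i. positive_recurrent T M g (delta (xa i))"
proof -
  define c where "c = (MIN i. (MIN j. T j (xa i)) * M i (xa i) (ya i))"
  have "0 < c"
    using \<open>positive_chain T\<close> anchors
    by (auto simp: c_def positive_chain_def anchor_pair_def Min_gr_iff)
  have hit: "\<exists>y. c \<le> alpha T M (g w) y w \<and> rupd T M (g w) y w \<in> range (\<lambda>i. delta (xa i))"
    if "w \<in> prob_simplex" for w
  proof (intro exI conjI)
    have "c \<le> (MIN j. T j (xa (g w))) * M (g w) (xa (g w)) (ya (g w))"
      by (simp add: c_def)
    also have "\<dots> \<le> alpha T M (g w) (ya (g w)) w"
      by (rule alpha_anchor_ge[OF anchors that])
    finally show "c \<le> alpha T M (g w) (ya (g w)) w" .
    with \<open>0 < c\<close> show "rupd T M (g w) (ya (g w)) w \<in> range (\<lambda>i. delta (xa i))"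
      using rupd_anchor[OF anchors] by simp
  qed
  have "\<exists>a\<in>range (\<lambda>i. delta (xa i)). info.positive_recurrent_at a"
    by (rule info.exists_positive_recurrent_in_hitting_set[where c = c and d\<^sub>0 = "delta (xa undefined)"])
      (use \<open>0 < c\<close> hit in \<open>auto simp: delta_in_prob_simplex\<close>)
  then show ?thesis by (auto simp: positive_recurrent_iff delta_in_info_R)
qed

end

theorem proposition2p22:
  fixes T :: "'s::finite \<Rightarrow> 's \<Rightarrow> real"
    and M :: "'o::finite \<Rightarrow> 's \<Rightarrow> 'v::finite \<Rightarrow> real"
    and g :: "('s \<Rightarrow> real) \<Rightarrow> 'o"
  assumes "stochastic_matrix T"
    and "\<And>i. stochastic_matrix (M i)"
    and "positive_chain T"
    and "anchored T M"
    and "\<And>i. {z \<in> prob_simplex. g z = i} \<in> sets borel"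
  shows "\<exists>i x y. anchor_pair M i x y \<and> positive_recurrent T M g (delta x)"
proof -
  interpret hmm_policy T M g
    using assms(1,2) by unfold_locales
  obtain xa ya where anchors: "\<And>i. anchor_pair M i (xa i) (ya i)"
    using assms(4) unfolding anchored_def by metis
  then obtain i where "positive_recurrent T M g (delta (xa i))"
    using exists_positive_recurrent_anchor[OF assms(3)] by blast
  with anchors show ?thesis by blast
qed

end
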